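(* Let $G$ be a two-directional orthogonal ray graph with given bipartition $(U,V)$ and without twins. Then $G$ has exactly one normalized representation if and only if $G$ is a chain graph.
   Context: All graphs are finite and simple. $G$ is a bipartite graph with a fixed bipartition $(U,V)$; $N(x)$ denotes the open neighborhood of $x$. Standing assumption: $G$ has no twins, i.e. no two distinct vertices $x\neq y$ with $N(x)=N(y)$. A representation of $G$ is a pair $(<_x,<_y)$ of linear orders on $V(G)$ such that for all $u\in U$ and $v\in V$: $uv\in E(G)$ iff ($u<_x v$ and $u<_y v$). $G$ is a two-directional orthogonal ray graph if it has a representation. A representation $(<_x,<_y)$ is normalized if: (a) for all $u_1,u_2\in U$: ($u_1<_x u_2$ and $u_1<_y u_2$) iff $N(u_1)\supsetneq N(u_2)$; (b) for all $v_1,v_2\in V$: ($v_1<_x v_2$ and $v_1<_y v_2$) iff $N(v_1)\subsetneq N(v_2)$; (c) for all $u\in U$, $v\in V$: ($v<_x u$ and $v<_y u$) iff for every $v'\in N(u)$, $N(v)\subsetneq N(v')$. Two normalized representations are different if they differ as pairs of linear orders. A bipartite graph with bipartition $(U,V)$ is a chain graph if the neighborhoods $\{N(u):u\in U\}$ are linearly ordered by inclusion (equivalently, there is a linear order $<_U$ on $U$ with $u_1<_U u_2 \iff N(u_1)\subseteq N(u_2)$). *)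

theory Defs
  imports Main
begin

definition bipartite_graph :: "'a set \<Rightarrow> 'a set \<Rightarrow> ('a \<Rightarrow> 'a \<Rightarrow> bool) \<Rightarrow> bool" where
  "bipartite_graph U V E \<longleftrightarrow> finite U \<and> finite V \<and> U \<inter> V = {} \<and>
     (\<forall>x y. E x y \<longrightarrow> E y x) \<and>
     (\<forall>x y. E x y \<longrightarrow> (x \<in> U \<and> y \<in> V) \<or> (x \<in> V \<and> y \<in> U))"

definition nbhd :: "('a \<Rightarrow> 'a \<Rightarrow> bool) \<Rightarrow> 'a \<Rightarrow> 'a set" where
  "nbhd E x = {y. E x y}"

definition no_twins :: "'a set \<Rightarrow> 'a set \<Rightarrow> ('a \<Rightarrow> 'a \<Rightarrow> bool) \<Rightarrow> bool" where
  "no_twins U V E \<longleftrightarrow> (\<forall>x \<in> U \<union> V. \<forall>y \<in> U \<union> V. x \<noteq> y \<longrightarrow> nbhd E x \<noteq> nbhd E y)"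

definition lin_order :: "'a set \<Rightarrow> 'a rel \<Rightarrow> bool" where
  "lin_order A r \<longleftrightarrow> r \<subseteq> A \<times> A \<and> strict_linear_order_on A r"

definition representation ::
  "'a set \<Rightarrow> 'a set \<Rightarrow> ('a \<Rightarrow> 'a \<Rightarrow> bool) \<Rightarrow> 'a rel \<Rightarrow> 'a rel \<Rightarrow> bool" where
  "representation U V E X Y \<longleftrightarrow> lin_order (U \<union> V) X \<and> lin_order (U \<union> V) Y \<and>
     (\<forall>u \<in> U. \<forall>v \<in> V. E u v \<longleftrightarrow> ((u, v) \<in> X \<and> (u, v) \<in> Y))"

definition tdor_graph :: "'a set \<Rightarrow> 'a set \<Rightarrow> ('a \<Rightarrow> 'a \<Rightarrow> bool) \<Rightarrow> bool" where
  "tdor_graph U V E \<longleftrightarrow> (\<exists>X Y. representation U V E X Y)"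

definition normalized ::
  "'a set \<Rightarrow> 'a set \<Rightarrow> ('a \<Rightarrow> 'a \<Rightarrow> bool) \<Rightarrow> 'a rel \<Rightarrow> 'a rel \<Rightarrow> bool" where
  "normalized U V E X Y \<longleftrightarrow> representation U V E X Y \<and>
     (\<forall>u1 \<in> U. \<forall>u2 \<in> U. ((u1, u2) \<in> X \<and> (u1, u2) \<in> Y) \<longleftrightarrow> nbhd E u1 \<supset> nbhd E u2) \<and>
     (\<forall>v1 \<in> V. \<forall>v2 \<in> V. ((v1, v2) \<in> X \<and> (v1, v2) \<in> Y) \<longleftrightarrow> nbhd E v1 \<subset> nbhd E v2) \<and>
     (\<forall>u \<in> U. \<forall>v \<in> V. ((v, u) \<in> X \<and> (v, u) \<in> Y) \<longleftrightarrow>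
         (\<forall>v' \<in> nbhd E u. nbhd E v \<subset> nbhd E v'))"

definition chain_graph :: "'a set \<Rightarrow> 'a set \<Rightarrow> ('a \<Rightarrow> 'a \<Rightarrow> bool) \<Rightarrow> bool" where
  "chain_graph U V E \<longleftrightarrow>
     (\<forall>u1 \<in> U. \<forall>u2 \<in> U. nbhd E u1 \<subseteq> nbhd E u2 \<or> nbhd E u2 \<subseteq> nbhd E u1)"

end

theory Submission
  imports Defs
begin

text \<open>If two vertices u1, u2 of U have incomparable neighbourhoods, condition (a) forces
the two orders of a normalized representation to disagree on them, so exchanging the two
orders yields a second normalized representation. In a twin-free chain graph, on the other
hand, the neighbourhoods on each side form a chain, so ranking the vertices by counting
smaller neighbourhoods gives one linear order which, used in both coordinates, is a normalized
representation; conditions (a)--(c) and the edge condition force both orders of every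
normalized representation to contain it, and a linear order containing another one equals
it.\<close>

definition order_by :: "'a set \<Rightarrow> ('a \<Rightarrow> 'b::linorder) \<Rightarrow> 'a rel" where
  "order_by A f = {(a, b). a \<in> A \<and> b \<in> A \<and> f a < f b}"

lemma lin_order_order_by:
  assumes "inj_on f A"
  shows "lin_order A (order_by A f)"
  using assms
  unfolding lin_order_def strict_linear_order_on_def order_by_def
    trans_def irrefl_def total_on_def inj_on_def
  by (auto dest: linorder_neqE)

lemma lin_order_eq_if_subset:
  assumes "lin_order A R" and "lin_order A S" and "R \<subseteq> S"
  shows "S = R"
proof
  have tot: "total_on A R" and sub: "S \<subseteq> A \<times> A" and "trans S" "irrefl S"
    using assms(1,2) unfolding lin_order_def strict_linear_order_on_def by blast+
  then have "(b, a) \<notin> S" if "(a, b) \<in> S" for a b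
    using that by (meson irrefl_def transD)
  then show "S \<subseteq> R"
    using tot sub assms(3) \<open>irrefl S\<close> unfolding total_on_def irrefl_def by fast
qed (fact assms(3))

lemma card_less_iff_psubset_if_comparable:
  assumes "finite S" "finite T" and "S \<subseteq> T \<or> T \<subseteq> S"
  shows "card S < card T \<longleftrightarrow> S \<subset> T"
  using assms by (metis card_mono leD psubset_card_mono psubset_eq)

lemma chain_graph_if_normalized_diagonal:
  assumes "normalized U V E X X"
  shows "chain_graph U V E"
  unfolding chain_graph_def
proof (intro ballI)
  fix u1 u2 assume u: "u1 \<in> U" "u2 \<in> U"
  have tot: "total_on (U \<union> V) X"
    using assms unfolding normalized_def representation_def lin_order_def
      strict_linear_order_on_def by blast
  have "(u1, u2) \<in> X \<longleftrightarrow> nbhd E u2 \<subset> nbhd E u1" "(u2, u1) \<in> X \<longleftrightarrow> nbhd E u1 \<subset> nbhd E u2"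
    using assms u unfolding normalized_def by simp_all
  then show "nbhd E u1 \<subseteq> nbhd E u2 \<or> nbhd E u2 \<subseteq> nbhd E u1"
    using tot u unfolding total_on_def by (metis UnI1 psubset_imp_subset subset_refl)
qed

lemma normalized_swap: "normalized U V E X Y \<Longrightarrow> normalized U V E Y X"
  unfolding normalized_def representation_def by (simp add: conj_comms)

text \<open>In a chain graph the non-neighbours
of u are exactly the v' with u \<notin> N(v'), and they all have neighbourhood strictly below
that of any neighbour of u; this makes u precede v in rank precisely when they are
adjacent.\<close>

definition rank :: "'a set \<Rightarrow> 'a set \<Rightarrow> ('a \<Rightarrow> 'a \<Rightarrow> bool) \<Rightarrow> 'a \<Rightarrow> nat" where
  "rank U V E x = (if x \<in> U then 2 * card (V - nbhd E x)
                   else Suc (2 * card {v \<in> V. nbhd E v \<subset> nbhd E x}))"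

definition rank_order :: "'a set \<Rightarrow> 'a set \<Rightarrow> ('a \<Rightarrow> 'a \<Rightarrow> bool) \<Rightarrow> 'a rel" where
  "rank_order U V E = order_by (U \<union> V) (rank U V E)"

lemma rank_U: "u \<in> U \<Longrightarrow> rank U V E u = 2 * card (V - nbhd E u)"
  unfolding rank_def by simp

lemma rank_odd_iff: "odd (rank U V E x) \<longleftrightarrow> x \<notin> U"
  unfolding rank_def by simp

context
  fixes U V :: "'a set" and E :: "'a \<Rightarrow> 'a \<Rightarrow> bool"
  assumes bip: "bipartite_graph U V E"
begin

lemma finite_V: "finite V"
  using bip unfolding bipartite_graph_def by blast

lemma disjoint_U_V: "U \<inter> V = {}"
  using bip unfolding bipartite_graph_def by blast

lemma mem_nbhd_iff: "x \<in> nbhd E y \<longleftrightarrow> y \<in> nbhd E x"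
  using bip unfolding bipartite_graph_def nbhd_def by blast

lemma nbhd_U_subset: "u \<in> U \<Longrightarrow> nbhd E u \<subseteq> V"
  using bip unfolding bipartite_graph_def nbhd_def by blast

lemma nbhd_V_subset: "v \<in> V \<Longrightarrow> nbhd E v \<subseteq> U"
  using bip unfolding bipartite_graph_def nbhd_def by blast

lemma chain_graph_nbhd_V_comparable:
  assumes "chain_graph U V E" and "v1 \<in> V" "v2 \<in> V"
  shows "nbhd E v1 \<subseteq> nbhd E v2 \<or> nbhd E v2 \<subseteq> nbhd E v1"
proof (rule ccontr)
  assume "\<not> ?thesis"
  then obtain u1 u2 where "u1 \<in> nbhd E v1 - nbhd E v2" "u2 \<in> nbhd E v2 - nbhd E v1"
    by blast
  moreover have "u1 \<in> U" "u2 \<in> U"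
    using calculation nbhd_V_subset assms(2,3) by blast+
  ultimately show False
    using assms(1) mem_nbhd_iff unfolding chain_graph_def by blast
qed

abbreviation below :: "'a \<Rightarrow> 'a set" where
  "below v \<equiv> {v' \<in> V. nbhd E v' \<subset> nbhd E v}"

lemma rank_V: "v \<in> V \<Longrightarrow> rank U V E v = Suc (2 * card (below v))"
  using disjoint_U_V unfolding rank_def by auto

context
  assumes chain: "chain_graph U V E"
begin

lemma rank_U_less_iff:
  assumes "u1 \<in> U" "u2 \<in> U"
  shows "rank U V E u1 < rank U V E u2 \<longleftrightarrow> nbhd E u2 \<subset> nbhd E u1"
proof -
  have "card (V - nbhd E u1) < card (V - nbhd E u2) \<longleftrightarrow> V - nbhd E u1 \<subset> V - nbhd E u2"
    using chain assms finite_V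
    by (intro card_less_iff_psubset_if_comparable) (auto simp: chain_graph_def)
  also have "\<dots> \<longleftrightarrow> nbhd E u2 \<subset> nbhd E u1"
    using nbhd_U_subset assms by blast
  finally show ?thesis
    using assms by (simp add: rank_U)
qed

lemma rank_V_less_iff:
  assumes "v1 \<in> V" "v2 \<in> V"
  shows "rank U V E v1 < rank U V E v2 \<longleftrightarrow> nbhd E v1 \<subset> nbhd E v2"
proof -
  have comparable: "nbhd E v1 \<subseteq> nbhd E v2 \<or> nbhd E v2 \<subseteq> nbhd E v1"
    using chain_graph_nbhd_V_comparable[OF chain assms] .
  then have "card (below v1) < card (below v2) \<longleftrightarrow> below v1 \<subset> below v2"
    using finite_V by (intro card_less_iff_psubset_if_comparable) auto
  also have "\<dots> \<longleftrightarrow> nbhd E v1 \<subset> nbhd E v2"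
    using comparable assms by blast
  finally show ?thesis
    using assms by (simp add: rank_V)
qed

lemma adjacent_iff_rank_less:
  assumes u: "u \<in> U" and v: "v \<in> V"
  shows "E u v \<longleftrightarrow> rank U V E u < rank U V E v"
proof -
  have nonnbrs: "V - nbhd E u = {v' \<in> V. u \<notin> nbhd E v'}"
    using mem_nbhd_iff[of _ u] by blast
  have fin: "finite (V - nbhd E u)" "finite (below v)"
    using finite_V by simp_all
  have "card (V - nbhd E u) \<le> card (below v)" if "E u v"
  proof (rule card_mono[OF fin(2)], rule subsetI)
    fix v' assume v': "v' \<in> V - nbhd E u"
    have "u \<in> nbhd E v - nbhd E v'"
      using that v' mem_nbhd_iff[of u] unfolding nonnbrs by (auto simp: nbhd_def)
    then show "v' \<in> below v"
      using v' chain_graph_nbhd_V_comparable[OF chain v, of v'] by blast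
  qed
  moreover have "card (below v) < card (V - nbhd E u)" if "\<not> E u v"
  proof (rule psubset_card_mono[OF fin(1)])
    have "u \<notin> nbhd E v"
      using that mem_nbhd_iff[of u] by (simp add: nbhd_def)
    then have "below v \<subseteq> V - nbhd E u"
      unfolding nonnbrs by blast
    moreover have "v \<in> V - nbhd E u - below v"
      using that v by (simp add: nbhd_def)
    ultimately show "below v \<subset> V - nbhd E u"
      by blast
  qed
  ultimately show ?thesis
    using u v by (cases "E u v") (simp_all add: rank_U rank_V)
qed

lemma nonadjacent_iff_rank_less:
  assumes "u \<in> U" and "v \<in> V"
  shows "\<not> E u v \<longleftrightarrow> rank U V E v < rank U V E u"
proof -
  have "rank U V E u \<noteq> rank U V E v"
    using assms disjoint_U_V rank_odd_iff by (metis disjoint_iff)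
  then show ?thesis
    using adjacent_iff_rank_less[OF assms] by linarith
qed

lemma nonadjacent_iff_nbhd_below_nbrs:
  assumes u: "u \<in> U" and v: "v \<in> V"
  shows "\<not> E u v \<longleftrightarrow> (\<forall>v' \<in> nbhd E u. nbhd E v \<subset> nbhd E v')"
proof
  assume "\<not> E u v"
  then have "u \<in> nbhd E v' - nbhd E v" if "v' \<in> nbhd E u" for v'
    using that mem_nbhd_iff by (auto simp: nbhd_def)
  then show "\<forall>v' \<in> nbhd E u. nbhd E v \<subset> nbhd E v'"
    using chain_graph_nbhd_V_comparable[OF chain v] nbhd_U_subset[OF u] by blast
qed (auto simp: nbhd_def)

lemma inj_on_rank:
  assumes "no_twins U V E"
  shows "inj_on (rank U V E) (U \<union> V)"
proof (rule inj_onI, rule ccontr)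
  fix x y
  assume x: "x \<in> U \<union> V" and y: "y \<in> U \<union> V" and eq: "rank U V E x = rank U V E y"
    and "x \<noteq> y"
  then have "nbhd E x \<noteq> nbhd E y"
    using assms unfolding no_twins_def by blast
  moreover have "x \<in> U \<longleftrightarrow> y \<in> U"
    using eq rank_odd_iff by metis
  ultimately show False
    using x y eq chain rank_U_less_iff rank_V_less_iff chain_graph_nbhd_V_comparable[OF chain]
    unfolding chain_graph_def by (metis UnE less_irrefl psubset_eq)
qed

lemma lin_order_rank_order:
  assumes "no_twins U V E"
  shows "lin_order (U \<union> V) (rank_order U V E)"
  unfolding rank_order_def by (rule lin_order_order_by[OF inj_on_rank[OF assms]])

lemma rank_order_representation:
  assumes "no_twins U V E"
  shows "representation U V E (rank_order U V E) (rank_order U V E)"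
  using lin_order_rank_order[OF assms] adjacent_iff_rank_less
  unfolding representation_def rank_order_def order_by_def by simp

lemma rank_order_normalized:
  assumes "no_twins U V E"
  shows "normalized U V E (rank_order U V E) (rank_order U V E)"
  unfolding normalized_def
proof (intro conjI ballI rank_order_representation[OF assms])
  fix u1 u2 assume "u1 \<in> U" "u2 \<in> U"
  then show "(u1, u2) \<in> rank_order U V E \<and> (u1, u2) \<in> rank_order U V E
      \<longleftrightarrow> nbhd E u2 \<subset> nbhd E u1"
    by (simp add: rank_U_less_iff rank_order_def order_by_def)
next
  fix v1 v2 assume "v1 \<in> V" "v2 \<in> V"
  then show "(v1, v2) \<in> rank_order U V E \<and> (v1, v2) \<in> rank_order U V E
      \<longleftrightarrow> nbhd E v1 \<subset> nbhd E v2"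
    by (simp add: rank_V_less_iff rank_order_def order_by_def)
next
  fix u v assume "u \<in> U" "v \<in> V"
  then show "(v, u) \<in> rank_order U V E \<and> (v, u) \<in> rank_order U V E
      \<longleftrightarrow> (\<forall>v' \<in> nbhd E u. nbhd E v \<subset> nbhd E v')"
    by (simp add: rank_order_def order_by_def
        flip: nonadjacent_iff_rank_less nonadjacent_iff_nbhd_below_nbrs)
qed

lemma rank_order_subset_normalized:
  assumes "normalized U V E X Y"
  shows "rank_order U V E \<subseteq> X"
proof (rule subrelI)
  fix a b
  assume "(a, b) \<in> rank_order U V E"
  then have a: "a \<in> U \<union> V" and b: "b \<in> U \<union> V" and less: "rank U V E a < rank U V E b"
    unfolding rank_order_def order_by_def by auto
  have "((a, b) \<in> X \<and> (a, b) \<in> Y) \<longleftrightarrow> rank U V E a < rank U V E b"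
  proof (cases "a \<in> U"; cases "b \<in> U")
    assume "a \<in> U" "b \<in> U"
    then show ?thesis
      using assms rank_U_less_iff unfolding normalized_def by simp
  next
    assume "a \<in> U" "b \<notin> U"
    then show ?thesis
      using assms b adjacent_iff_rank_less unfolding normalized_def representation_def by simp
  next
    assume "a \<notin> U" "b \<in> U"
    then have "a \<in> V" using a by blast
    then show ?thesis
      using assms \<open>b \<in> U\<close> nonadjacent_iff_rank_less nonadjacent_iff_nbhd_below_nbrs
      unfolding normalized_def by simp
  next
    assume "a \<notin> U" "b \<notin> U"
    then show ?thesis
      using assms a b rank_V_less_iff unfolding normalized_def by simp
  qed
  then show "(a, b) \<in> X"
    using less by blast
qed

lemma normalized_eq_rank_order:
  assumes "no_twins U V E" and "normalized U V E X Y"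
  shows "(X, Y) = (rank_order U V E, rank_order U V E)"
proof -
  have "lin_order (U \<union> V) X" "lin_order (U \<union> V) Y"
    using assms(2) unfolding normalized_def representation_def by blast+
  moreover have "rank_order U V E \<subseteq> X" "rank_order U V E \<subseteq> Y"
    using rank_order_subset_normalized assms(2) normalized_swap by blast+
  ultimately show ?thesis
    using lin_order_eq_if_subset lin_order_rank_order[OF assms(1)] by metis
qed

end

end

theorem theorem1:
  fixes U V :: "'a set" and E :: "'a \<Rightarrow> 'a \<Rightarrow> bool"
  assumes "bipartite_graph U V E"
    and "tdor_graph U V E"
    and "no_twins U V E"
  shows "(\<exists>!XY. normalized U V E (fst XY) (snd XY)) \<longleftrightarrow> chain_graph U V E"
proof
  assume "\<exists>!XY. normalized U V E (fst XY) (snd XY)"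
  then obtain XY where n: "normalized U V E (fst XY) (snd XY)"
    and unique: "\<forall>XY'. normalized U V E (fst XY') (snd XY') \<longrightarrow> XY' = XY"
    by (rule ex1E)
  have "(snd XY, fst XY) = XY"
    by (rule unique[rule_format]) (simp add: normalized_swap[OF n])
  then have "snd XY = fst XY"
    by (metis fst_conv)
  then show "chain_graph U V E"
    using chain_graph_if_normalized_diagonal[of U V E "fst XY"] n by simp
next
  assume chain: "chain_graph U V E"
  show "\<exists>!XY. normalized U V E (fst XY) (snd XY)"
  proof (rule ex1I)
    show "normalized U V E (fst (rank_order U V E, rank_order U V E))
        (snd (rank_order U V E, rank_order U V E))"
      using rank_order_normalized[OF assms(1) chain assms(3)] by simp
  next
    fix XY assume "normalized U V E (fst XY) (snd XY)"
    from normalized_eq_rank_order[OF assms(1) chain assms(3) this]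
    show "XY = (rank_order U V E, rank_order U V E)"
      by simp
  qed
qed

end
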